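(* Let $1\le s<p<\infty$, let $\emptyset\neq A\subseteq L^p(E)$, and let $X$ be the a.s. unique closed random set with $\operatorname{chd}_pA=\operatorname{cl}_p\operatorname{dec}A=L^p(X)$. Then \[ \operatorname{chd}_sA=\operatorname{chd}_0A\cap L^s(E)=L^0(X)\cap L^s(E)=L^s(X), \] and consequently \[ \operatorname{chd}_sA\cap L^p(E)=\operatorname{chd}_0A\cap L^p(E)=\operatorname{chd}_pA . \]
   Context: $E$ is a separable Banach space; $(\Omega,\mathcal F,\mathbb P)$ a complete probability space. $L^0(E)$: a.s.-classes of $E$-valued random variables; $L^q(E)=\{\xi:\mathbb E|\xi|^q<\infty\}$. $\operatorname{cl}_q$: norm closure in $L^q(E)$ ($q\ge1$), closure in probability ($q=0$). $\operatorname{dec}A$: all finite decompositions $\sum_{i=1}^m1_{B_i}\xi_i$, $\xi_i\in A$, $(B_i)$ a measurable partition. A closed random set is a closed-valued Effros measurable multifunction; $L^q(X)=\{\xi\in L^q(E):\xi\in X\text{ a.s.}\}$. For $q\in\{0\}\cup[1,\infty)$ and nonempty $A\subseteq L^q(E)$, $\operatorname{chd}_qA$ is the $q$-Choquet decomposable hull (smallest subset of $L^q(E)$ containing $A$ and the $L^q$-barycenters of all transition kernels $K$ with $K(\omega)$ a Dirac measure in $F_A(\omega)$ a.s., where $\operatorname{cl}_q\operatorname{dec}A=L^q(F_A)$); it satisfies $\operatorname{chd}_qA=\operatorname{cl}_q\operatorname{dec}A$. *)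

theory Defs
  imports "HOL-Probability.Probability"
begin

text \<open>Random variables are represented by functions on the sample space; all sets
below (except dec) are automatically closed under a.s. equality, so they play the
role of sets of a.s.-classes. The exponent q = 0 means convergence in probability.\<close>

definition Lq :: "'w measure \<Rightarrow> real \<Rightarrow> ('w \<Rightarrow> 'e::{banach,second_countable_topology}) set" where
  "Lq M q = (if q = 0 then borel_measurable M
     else {f \<in> borel_measurable M. integrable M (\<lambda>w. norm (f w) powr q)})"

definition closed_random_set :: "'w measure \<Rightarrow> ('w \<Rightarrow> 'e::{banach,second_countable_topology} set) \<Rightarrow> bool" where
  "closed_random_set M X \<longleftrightarrow> (\<forall>w\<in>space M. closed (X w)) \<and>
     (\<forall>G. open G \<longrightarrow> {w \<in> space M. X w \<inter> G \<noteq> {}} \<in> sets M)"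

definition Lq_sel :: "'w measure \<Rightarrow> real \<Rightarrow> ('w \<Rightarrow> 'e::{banach,second_countable_topology} set)
    \<Rightarrow> ('w \<Rightarrow> 'e) set" where
  "Lq_sel M q X = {f \<in> Lq M q. AE w in M. f w \<in> X w}"

definition clq :: "'w measure \<Rightarrow> real \<Rightarrow> ('w \<Rightarrow> 'e::{banach,second_countable_topology}) set
    \<Rightarrow> ('w \<Rightarrow> 'e) set" where
  "clq M q S = (if q = 0 then
      {f \<in> Lq M 0. \<forall>e>0. \<exists>g\<in>S. measure M {w \<in> space M. norm (f w - g w) > e} < e}
    else
      {f \<in> Lq M q. \<forall>e>0. \<exists>g\<in>S. (\<integral>\<^sup>+ w. ennreal (norm (f w - g w) powr q) \<partial>M) < ennreal e})"

definition dec :: "'w measure \<Rightarrow> ('w \<Rightarrow> 'e::{banach,second_countable_topology}) set \<Rightarrow> ('w \<Rightarrow> 'e) set" where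
  "dec M A = {(\<lambda>w. \<Sum>i<m. indicator (B i) w *\<^sub>R \<xi> i w) | (m::nat) B \<xi>.
      (\<forall>i<m. B i \<in> sets M \<and> \<xi> i \<in> A) \<and> disjoint_family_on B {..<m} \<and> (\<Union>i<m. B i) = space M}"

definition chd :: "'w measure \<Rightarrow> real \<Rightarrow> ('w \<Rightarrow> 'e::{banach,second_countable_topology}) set \<Rightarrow> ('w \<Rightarrow> 'e) set" where
  "chd M q A = \<Inter>{S. S \<subseteq> Lq M q \<and> A \<subseteq> S \<and>
     (\<forall>F (K :: 'w \<Rightarrow> 'e measure).
        closed_random_set M F \<and> Lq_sel M q F = clq M q (dec M A) \<and>
        K \<in> M \<rightarrow>\<^sub>M prob_algebra borel \<and>
        (AE w in M. \<exists>x\<in>F w. K w = return borel x) \<and>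
        (\<lambda>w. \<integral>x. x \<partial>(K w)) \<in> Lq M q
        \<longrightarrow> (\<lambda>w. \<integral>x. x \<partial>(K w)) \<in> S)}"

end

theory Submission
  imports Defs
begin

text \<open>
  The barycenter of a kernel that is a.s. a Dirac measure in \<open>X\<close> is an a.s. selection of \<open>X\<close>,
  and every selection is the barycenter of its own Dirac kernel; hence \<open>chd\<^sub>q A = L\<^sup>q(X)\<close>
  as soon as \<open>cl\<^sub>q dec A = L\<^sup>q(X)\<close>, and everything reduces to computing \<open>cl\<^sub>s dec A\<close> and
  \<open>cl\<^sub>0 dec A\<close>.

  Decompositions of selections are selections, and since \<open>X\<close> is closed-valued, limits in
  probability of a.s. selections are a.s. selections (Borel--Cantelli along a fast subsequence);
  as \<open>L\<^sup>s\<close>-convergence implies convergence in probability, \<open>cl\<^sub>q dec A \<subseteq> L\<^sup>q(X)\<close>.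
  Conversely, given a selection \<open>f\<close> and some \<open>g \<in> L\<^sup>p(X)\<close>, replacing \<open>f\<close> by \<open>g\<close> where
  \<open>\<parallel>f\<parallel> > n\<close> gives selections in \<open>L\<^sup>p(X) = cl\<^sub>p dec A\<close> converging to \<open>f\<close> in probability,
  and in \<open>L\<^sup>s\<close> by dominated convergence if \<open>f \<in> L\<^sup>s\<close>. On a probability space
  \<open>L\<^sup>p\<close>-approximation implies \<open>L\<^sup>s\<close>-approximation and approximation in probability, and
  each closure is idempotent, so \<open>L\<^sup>q(X) \<subseteq> cl\<^sub>q dec A\<close> for \<open>q \<in> {0, s}\<close>.
\<close>

lemma Lq_0: "Lq M 0 = borel_measurable M"
  by (simp add: Lq_def)

lemma Lq_subset_borel_measurable: "Lq M q \<subseteq> borel_measurable M"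
  by (auto simp: Lq_def)

lemma Lq_subset_Lq_0: "Lq M q \<subseteq> Lq M 0"
  by (simp add: Lq_0 Lq_subset_borel_measurable)

lemma Lq_sel_subset_Lq: "Lq_sel M q X \<subseteq> Lq M q"
  by (auto simp: Lq_sel_def)

lemma Lq_sel_subset_Lq_sel_0: "Lq_sel M q X \<subseteq> Lq_sel M 0 X"
  using Lq_subset_Lq_0 by (auto simp: Lq_sel_def)

lemma Lq_sel_Int_Lq:
  fixes X :: "'w \<Rightarrow> 'e::{banach,second_countable_topology} set"
  assumes "Lq M r \<subseteq> (Lq M q :: ('w \<Rightarrow> 'e) set)"
  shows "Lq_sel M q X \<inter> Lq M r = Lq_sel M r X"
  using assms by (auto simp: Lq_sel_def)

lemma (in prob_space) Lq_antimono:
  assumes "0 < s" "s \<le> q"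
  shows "Lq M q \<subseteq> Lq M s"
proof
  fix f assume f: "f \<in> Lq M q"
  then have [measurable]: "f \<in> borel_measurable M"
    and "integrable M (\<lambda>w. norm (f w) powr q)"
    using assms by (auto simp: Lq_def)
  then have bound_integrable: "integrable M (\<lambda>w. 1 + norm (f w) powr q)"
    by simp
  have bound: "norm (f w) powr s \<le> 1 + norm (f w) powr q" for w
  proof (cases "norm (f w) \<le> 1")
    case True
    then have "norm (f w) powr s \<le> 1"
      using assms powr_mono2[of s "norm (f w)" 1] by simp
    then show ?thesis by (simp add: add_increasing2)
  next
    case False
    then have "norm (f w) powr s \<le> norm (f w) powr q"
      using assms by (intro powr_mono) auto
    then show ?thesis by simp
  qed
  have "integrable M (\<lambda>w. norm (f w) powr s)"
    using bound_integrable
    by (rule Bochner_Integration.integrable_bound) (use bound in \<open>auto intro!: AE_I2\<close>)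
  then show "f \<in> Lq M s"
    using assms by (simp add: Lq_def)
qed

lemma clq_subset_Lq: "clq M q S \<subseteq> Lq M q"
  by (auto simp: clq_def)

lemma clq_mono: "S \<subseteq> T \<Longrightarrow> clq M q S \<subseteq> clq M q T"
  by (auto simp: clq_def) (meson subsetD)+

lemma Int_Lq_subset_clq_dec: "A \<inter> Lq M q \<subseteq> clq M q (dec M A)"
proof
  fix \<xi> assume \<xi>: "\<xi> \<in> A \<inter> Lq M q"
  \<comment> \<open>\<open>\<xi>\<close> itself need not lie in \<open>dec M A\<close>: its one-piece decomposition agrees with it only on \<open>space M\<close>.\<close>
  define g where "g = (\<lambda>w. \<Sum>i<(1::nat). indicator (space M) w *\<^sub>R \<xi> w)"
  have g: "g \<in> dec M A"
    unfolding g_def dec_def using \<xi>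
    by (intro CollectI exI[of _ "1::nat"] exI[of _ "\<lambda>_. space M"] exI[of _ "\<lambda>_. \<xi>"])
      (auto simp: disjoint_family_on_def)
  have "{w \<in> space M. e < norm (\<xi> w - g w)} = {}" if "e > 0" for e :: real
    using that by (auto simp: g_def)
  then have "\<forall>e>0. \<exists>g\<in>dec M A. measure M {w \<in> space M. e < norm (\<xi> w - g w)} < e"
    using g by (metis measure_empty)
  moreover have "(\<integral>\<^sup>+ w. ennreal (norm (\<xi> w - g w) powr q) \<partial>M) = 0"
    by (simp add: g_def cong: nn_integral_cong)
  then have "\<forall>e>0. \<exists>g\<in>dec M A. (\<integral>\<^sup>+ w. ennreal (norm (\<xi> w - g w) powr q) \<partial>M) < ennreal e"
    using g by (auto intro!: bexI[of _ g])
  ultimately show "\<xi> \<in> clq M q (dec M A)"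
    using \<xi> by (auto simp: clq_def)
qed

lemma dec_subset_Lq_sel_0:
  assumes "A \<subseteq> Lq_sel M 0 X"
  shows "dec M A \<subseteq> Lq_sel M 0 X"
proof
  fix g assume "g \<in> dec M A"
  then obtain m :: nat and B \<xi> where g: "g = (\<lambda>w. \<Sum>i<m. indicator (B i) w *\<^sub>R \<xi> i w)"
    and B: "\<forall>i<m. B i \<in> sets M \<and> \<xi> i \<in> A"
    and disj: "disjoint_family_on B {..<m}" and cover: "(\<Union>i<m. B i) = space M"
    unfolding dec_def by blast
  have \<xi>_meas: "\<xi> i \<in> borel_measurable M" and \<xi>_sel: "AE w in M. \<xi> i w \<in> X w" if "i < m" for i
    using assms B that by (auto simp: Lq_sel_def Lq_def)
  have "g \<in> borel_measurable M"
    unfolding g using B \<xi>_meas by (intro borel_measurable_sum borel_measurable_scaleR) auto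
  moreover have pick: "\<exists>i<m. g w = \<xi> i w" if w: "w \<in> space M" for w
  proof -
    obtain i where i: "i < m" "w \<in> B i" using w cover by auto
    have "g w = (\<Sum>j<m. if j = i then \<xi> j w else 0)"
      unfolding g using disj i by (intro sum.cong) (auto simp: disjoint_family_on_def indicator_def)
    also have "\<dots> = \<xi> i w"
      using i by simp
    finally show ?thesis using i by blast
  qed
  moreover have "AE w in M. \<forall>i\<in>{..<m}. \<xi> i w \<in> X w"
    using \<xi>_sel by (intro AE_finite_allI) auto
  then have "AE w in M. g w \<in> X w"
    by (rule AE_mp) (auto intro!: AE_I2 dest: pick)
  ultimately show "g \<in> Lq_sel M 0 X"
    by (simp add: Lq_sel_def Lq_def)
qed

lemma subset_Lq_sel_if_clq_dec_eq:
  assumes "A \<subseteq> Lq M p" "clq M p (dec M A) = Lq_sel M p X"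
  shows "A \<subseteq> Lq_sel M p X" "dec M A \<subseteq> Lq_sel M 0 X"
proof -
  show A_sel: "A \<subseteq> Lq_sel M p X"
    using Int_Lq_subset_clq_dec[of A M p] assms by blast
  then show "dec M A \<subseteq> Lq_sel M 0 X"
    using Lq_sel_subset_Lq_sel_0 by (intro dec_subset_Lq_sel_0) blast
qed

lemma chd_eq_Lq_sel:
  fixes A :: "('w \<Rightarrow> 'e::{banach,second_countable_topology}) set"
  assumes X: "closed_random_set M X" and clq_eq: "clq M q (dec M A) = Lq_sel M q X"
    and A: "A \<subseteq> Lq M q"
  shows "chd M q A = Lq_sel M q X"
proof
  have A_sel: "A \<subseteq> Lq_sel M q X"
    using Int_Lq_subset_clq_dec[of A M q] A clq_eq by blast
  have "(\<lambda>w. \<integral>x. x \<partial>K w) \<in> Lq_sel M q X"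
    if "Lq_sel M q F = clq M q (dec M A)" "AE w in M. \<exists>x\<in>F w. K w = return borel x"
      "(\<lambda>w. \<integral>x. x \<partial>K w) \<in> Lq M q"
    for F and K :: "'w \<Rightarrow> 'e measure"
  proof -
    have "(\<lambda>w. \<integral>x. x \<partial>K w) \<in> Lq_sel M q F"
      using that(2,3) unfolding Lq_sel_def by (auto elim!: AE_mp simp: integral_return)
    then show ?thesis using that(1) clq_eq by simp
  qed
  then show "chd M q A \<subseteq> Lq_sel M q X"
    unfolding chd_def using A_sel by (intro Inter_lower) (auto intro: Lq_sel_subset_Lq[THEN subsetD])
  show "Lq_sel M q X \<subseteq> chd M q A"
  proof
    fix f assume f: "f \<in> Lq_sel M q X"
    have barycenter: "(\<lambda>w. \<integral>x. x \<partial>return borel (f w)) = f"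
      by (simp add: integral_return)
    have "(\<lambda>w. return borel (f w)) \<in> M \<rightarrow>\<^sub>M prob_algebra borel"
      using f Lq_subset_borel_measurable
      by (auto simp: Lq_sel_def intro: measurable_compose[OF _ measurable_return_prob_space])
    moreover have "AE w in M. \<exists>x\<in>X w. return borel (f w) = return borel x"
      using f by (auto simp: Lq_sel_def elim: AE_mp)
    ultimately show "f \<in> chd M q A"
      unfolding chd_def using X clq_eq f
      by (auto simp: Lq_sel_def dest!: spec[of _ X] spec[of _ "\<lambda>w. return borel (f w)"] simp: barycenter)
  qed
qed

lemma powr_add_le_two_powr:
  fixes a b s :: real
  assumes "0 \<le> a" "0 \<le> b" "0 < s"
  shows "(a + b) powr s \<le> 2 powr s * (a powr s + b powr s)"
proof -
  have "(a + b) powr s \<le> (2 * max a b) powr s"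
    using assms by (intro powr_mono2) auto
  also have "\<dots> = 2 powr s * max a b powr s"
    using assms by (simp add: powr_mult)
  also have "\<dots> \<le> 2 powr s * (a powr s + b powr s)"
    by (intro mult_left_mono) (auto simp: max_def)
  finally show ?thesis .
qed

lemma norm_diff_powr_le:
  fixes x y z :: "'a::real_normed_vector"
  assumes "0 < s"
  shows "norm (x - z) powr s \<le> 2 powr s * (norm (x - y) powr s + norm (y - z) powr s)"
proof -
  have "norm (x - z) powr s \<le> (norm (x - y) + norm (y - z)) powr s"
    using assms norm_triangle_ineq[of "x - y" "y - z"] by (intro powr_mono2) auto
  also have "\<dots> \<le> 2 powr s * (norm (x - y) powr s + norm (y - z) powr s)"
    using assms by (intro powr_add_le_two_powr) auto
  finally show ?thesis .
qed

lemma powr_le_split: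
  fixes u d s p :: real
  assumes "0 \<le> u" "0 < d" "0 < s" "s \<le> p"
  shows "u powr s \<le> d powr s + d powr (s - p) * u powr p"
proof (cases "u \<le> d")
  case True
  then have "u powr s \<le> d powr s"
    using assms by (intro powr_mono2) auto
  then show ?thesis by (simp add: add_increasing2)
next
  case False
  then have "u powr s = u powr (s - p) * u powr p"
    by (simp flip: powr_add)
  also have "\<dots> \<le> d powr (s - p) * u powr p"
    using False assms by (intro mult_right_mono powr_mono2') auto
  finally show ?thesis by (simp add: add_increasing)
qed

lemma Markov_inequality_norm_powr:
  assumes [measurable]: "h \<in> borel_measurable M" and "0 \<le> d" "0 < s"
  shows "ennreal (d powr s) * emeasure M {w \<in> space M. d < norm (h w)}
    \<le> (\<integral>\<^sup>+ w. ennreal (norm (h w) powr s) \<partial>M)"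
proof -
  let ?S = "{w \<in> space M. d < norm (h w)}"
  have [measurable]: "?S \<in> sets M"
    by measurable
  have "ennreal (d powr s) * emeasure M ?S = (\<integral>\<^sup>+ w. ennreal (d powr s) * indicator ?S w \<partial>M)"
    by (simp add: nn_integral_cmult_indicator)
  also have "\<dots> \<le> (\<integral>\<^sup>+ w. ennreal (norm (h w) powr s) \<partial>M)"
    using assms by (intro nn_integral_mono) (auto simp: indicator_def intro!: ennreal_leI powr_mono2)
  finally show ?thesis .
qed

lemma nn_integral_norm_diff_powr_le:
  fixes f g h :: "'w \<Rightarrow> 'e::{real_normed_vector,second_countable_topology}"
  assumes [measurable]: "f \<in> borel_measurable M" "g \<in> borel_measurable M" "h \<in> borel_measurable M"
    and "0 < s"
  shows "(\<integral>\<^sup>+ w. ennreal (norm (f w - h w) powr s) \<partial>M)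
    \<le> ennreal (2 powr s) * ((\<integral>\<^sup>+ w. ennreal (norm (f w - g w) powr s) \<partial>M)
        + (\<integral>\<^sup>+ w. ennreal (norm (g w - h w) powr s) \<partial>M))"
proof -
  have "ennreal (norm (f w - h w) powr s)
      \<le> ennreal (2 powr s * (norm (f w - g w) powr s + norm (g w - h w) powr s))" for w
    using norm_diff_powr_le[OF \<open>0 < s\<close>] by (rule ennreal_leI)
  then have "(\<integral>\<^sup>+ w. ennreal (norm (f w - h w) powr s) \<partial>M)
      \<le> (\<integral>\<^sup>+ w. ennreal (2 powr s) *
          (ennreal (norm (f w - g w) powr s) + ennreal (norm (g w - h w) powr s)) \<partial>M)"
    by (intro nn_integral_mono) (simp add: ennreal_mult)
  also have "\<dots> = ennreal (2 powr s) * ((\<integral>\<^sup>+ w. ennreal (norm (f w - g w) powr s) \<partial>M)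
        + (\<integral>\<^sup>+ w. ennreal (norm (g w - h w) powr s) \<partial>M))"
    by (simp add: nn_integral_cmult nn_integral_add)
  finally show ?thesis .
qed

lemma (in prob_space) nn_integral_powr_le_split:
  assumes [measurable]: "h \<in> borel_measurable M" and "0 < d" "0 < s" "s \<le> p"
  shows "(\<integral>\<^sup>+ w. ennreal (norm (h w) powr s) \<partial>M)
    \<le> ennreal (d powr s) + ennreal (d powr (s - p)) * (\<integral>\<^sup>+ w. ennreal (norm (h w) powr p) \<partial>M)"
proof -
  have "ennreal (norm (h w) powr s) \<le> ennreal (d powr s + d powr (s - p) * norm (h w) powr p)" for w
    using assms by (intro ennreal_leI powr_le_split) auto
  then have "(\<integral>\<^sup>+ w. ennreal (norm (h w) powr s) \<partial>M)
      \<le> (\<integral>\<^sup>+ w. ennreal (d powr s) + ennreal (d powr (s - p)) * ennreal (norm (h w) powr p) \<partial>M)"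
    by (intro nn_integral_mono) (simp add: ennreal_mult)
  also have "\<dots> = ennreal (d powr s) + ennreal (d powr (s - p)) * (\<integral>\<^sup>+ w. ennreal (norm (h w) powr p) \<partial>M)"
    by (simp add: nn_integral_add nn_integral_cmult emeasure_space_1)
  finally show ?thesis .
qed

lemma (in prob_space) nn_integral_powr_small_if_higher_small:
  assumes "0 < s" "s \<le> p" "0 < e"
  obtains \<eta> where "0 < \<eta>"
    and "\<And>h :: 'a \<Rightarrow> 'e::real_normed_vector. h \<in> borel_measurable M \<Longrightarrow>
      (\<integral>\<^sup>+ w. ennreal (norm (h w) powr p) \<partial>M) < ennreal \<eta> \<Longrightarrow>
      (\<integral>\<^sup>+ w. ennreal (norm (h w) powr s) \<partial>M) < ennreal e"
proof
  define d where "d = (e / 2) powr (1 / s)"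
  have "0 < d" and d_powr: "d powr s = e / 2"
    using assms by (auto simp: d_def powr_powr)
  show "0 < d powr (p - s) * (e / 2)"
    using \<open>0 < d\<close> \<open>0 < e\<close> by simp
  fix h :: "'a \<Rightarrow> 'e" assume [measurable]: "h \<in> borel_measurable M"
    and close: "(\<integral>\<^sup>+ w. ennreal (norm (h w) powr p) \<partial>M) < ennreal (d powr (p - s) * (e / 2))"
  have "ennreal (d powr (s - p)) * (\<integral>\<^sup>+ w. ennreal (norm (h w) powr p) \<partial>M)
      < ennreal (d powr (s - p)) * ennreal (d powr (p - s) * (e / 2))"
    using close \<open>0 < d\<close> by (intro ennreal_mult_strict_left_mono) auto
  also have "\<dots> = ennreal (e / 2)"
    using \<open>0 < d\<close> by (simp add: mult.assoc[symmetric] flip: ennreal_mult' powr_add)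
  finally have small: "ennreal (d powr (s - p)) * (\<integral>\<^sup>+ w. ennreal (norm (h w) powr p) \<partial>M)
      < ennreal (e / 2)" .
  have "(\<integral>\<^sup>+ w. ennreal (norm (h w) powr s) \<partial>M)
      \<le> ennreal (d powr s) + ennreal (d powr (s - p)) * (\<integral>\<^sup>+ w. ennreal (norm (h w) powr p) \<partial>M)"
    using assms \<open>0 < d\<close> by (intro nn_integral_powr_le_split) auto
  also have "\<dots> < ennreal (e / 2) + ennreal (e / 2)"
    using small by (simp add: d_powr ennreal_add_left_cancel_less)
  also have "\<dots> = ennreal e"
    using \<open>0 < e\<close> by (simp flip: ennreal_plus)
  finally show "(\<integral>\<^sup>+ w. ennreal (norm (h w) powr s) \<partial>M) < ennreal e" .
qed

lemma (in finite_measure) clq_subset_clq_0: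
  assumes "0 < s" and S: "S \<subseteq> borel_measurable M"
  shows "clq M s S \<subseteq> clq M 0 S"
proof
  fix f assume f: "f \<in> clq M s S"
  then have f_meas [measurable]: "f \<in> borel_measurable M"
    and approx: "\<forall>e>0. \<exists>g\<in>S. (\<integral>\<^sup>+ w. ennreal (norm (f w - g w) powr s) \<partial>M) < ennreal e"
    using \<open>0 < s\<close> Lq_subset_borel_measurable by (auto simp: clq_def)
  have "\<exists>g\<in>S. measure M {w \<in> space M. e < norm (f w - g w)} < e" if "e > 0" for e
  proof -
    have "e powr s * e > 0"
      using \<open>e > 0\<close> by simp
    then obtain g where g: "g \<in> S"
      and close: "(\<integral>\<^sup>+ w. ennreal (norm (f w - g w) powr s) \<partial>M) < ennreal (e powr s * e)"
      using approx by blast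
    have [measurable]: "g \<in> borel_measurable M"
      using g S by blast
    have diff_meas: "(\<lambda>w. f w - g w) \<in> borel_measurable M"
      by measurable
    have "ennreal (e powr s * measure M {w \<in> space M. e < norm (f w - g w)})
        \<le> (\<integral>\<^sup>+ w. ennreal (norm (f w - g w) powr s) \<partial>M)"
      using Markov_inequality_norm_powr[OF diff_meas, of e s] \<open>0 < s\<close> \<open>e > 0\<close>
      by (simp add: emeasure_eq_measure ennreal_mult)
    also note close
    finally have "measure M {w \<in> space M. e < norm (f w - g w)} < e"
      using \<open>e > 0\<close> by (simp add: ennreal_less_iff)
    then show ?thesis
      using g by blast
  qed
  then show "f \<in> clq M 0 S"
    using f_meas by (simp add: clq_def Lq_0)
qed

lemma (in prob_space) clq_subset_clq:
  fixes S :: "('a \<Rightarrow> 'e::{banach,second_countable_topology}) set"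
  assumes "0 < s" "s \<le> p" and S: "S \<subseteq> borel_measurable M"
  shows "clq M p S \<subseteq> clq M s S"
proof
  fix f assume f: "f \<in> clq M p S"
  then have f_Lq: "f \<in> Lq M s"
    and approx: "\<forall>e>0. \<exists>g\<in>S. (\<integral>\<^sup>+ w. ennreal (norm (f w - g w) powr p) \<partial>M) < ennreal e"
    using assms Lq_antimono clq_subset_Lq by (auto simp: clq_def)
  have f_meas [measurable]: "f \<in> borel_measurable M"
    using f_Lq Lq_subset_borel_measurable by blast
  have "\<exists>g\<in>S. (\<integral>\<^sup>+ w. ennreal (norm (f w - g w) powr s) \<partial>M) < ennreal e" if "0 < e" for e
  proof -
    obtain \<eta> where "0 < \<eta>" and small: "\<And>h :: 'a \<Rightarrow> 'e. h \<in> borel_measurable M \<Longrightarrow>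
        (\<integral>\<^sup>+ w. ennreal (norm (h w) powr p) \<partial>M) < ennreal \<eta> \<Longrightarrow>
        (\<integral>\<^sup>+ w. ennreal (norm (h w) powr s) \<partial>M) < ennreal e"
      using nn_integral_powr_small_if_higher_small[OF \<open>0 < s\<close> \<open>s \<le> p\<close> \<open>0 < e\<close>] by blast
    then obtain g where g: "g \<in> S"
      and close: "(\<integral>\<^sup>+ w. ennreal (norm (f w - g w) powr p) \<partial>M) < ennreal \<eta>"
      using approx by blast
    have [measurable]: "g \<in> borel_measurable M"
      using g S by blast
    have "(\<lambda>w. f w - g w) \<in> borel_measurable M"
      by measurable
    then show ?thesis
      using g small[OF _ close] by blast
  qed
  then show "f \<in> clq M s S"
    using f_Lq assms by (simp add: clq_def)
qed

lemma (in finite_measure) clq_0_clq_0: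
  assumes S: "S \<subseteq> borel_measurable M"
  shows "clq M 0 (clq M 0 S) \<subseteq> clq M 0 S"
proof
  fix f assume "f \<in> clq M 0 (clq M 0 S)"
  then have f_meas [measurable]: "f \<in> borel_measurable M"
    and approx: "\<forall>e>0. \<exists>g\<in>clq M 0 S. measure M {w \<in> space M. e < norm (f w - g w)} < e"
    by (auto simp: clq_def Lq_0)
  have "\<exists>h\<in>S. measure M {w \<in> space M. e < norm (f w - h w)} < e" if "e > 0" for e
  proof -
    obtain g where g: "g \<in> clq M 0 S"
      and fg: "measure M {w \<in> space M. e / 2 < norm (f w - g w)} < e / 2"
      using approx half_gt_zero[OF \<open>e > 0\<close>] by blast
    from g have "\<forall>e>0. \<exists>h\<in>S. measure M {w \<in> space M. e < norm (g w - h w)} < e"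
      by (simp add: clq_def)
    then obtain h where h: "h \<in> S"
      and gh: "measure M {w \<in> space M. e / 2 < norm (g w - h w)} < e / 2"
      using half_gt_zero[OF \<open>e > 0\<close>] by blast
    have [measurable]: "g \<in> borel_measurable M" "h \<in> borel_measurable M"
      using g h S clq_subset_Lq Lq_subset_borel_measurable by blast+
    have "e / 2 < norm (f w - g w) \<or> e / 2 < norm (g w - h w)" if "e < norm (f w - h w)" for w
      using that norm_triangle_ineq[of "f w - g w" "g w - h w"] by (simp, linarith)
    then have "{w \<in> space M. e < norm (f w - h w)}
        \<subseteq> {w \<in> space M. e / 2 < norm (f w - g w)} \<union> {w \<in> space M. e / 2 < norm (g w - h w)}"
      by blast
    then have "measure M {w \<in> space M. e < norm (f w - h w)}
        \<le> measure M ({w \<in> space M. e / 2 < norm (f w - g w)} \<union> {w \<in> space M. e / 2 < norm (g w - h w)})"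
      by (rule finite_measure_mono) measurable
    also have "\<dots> \<le> measure M {w \<in> space M. e / 2 < norm (f w - g w)}
        + measure M {w \<in> space M. e / 2 < norm (g w - h w)}"
      by (intro measure_Un_le) measurable
    finally show ?thesis
      using fg gh h by (intro bexI[of _ h]) auto
  qed
  then show "f \<in> clq M 0 S"
    using f_meas by (simp add: clq_def Lq_0)
qed

lemma clq_clq:
  assumes "0 < s" and S: "S \<subseteq> borel_measurable M"
  shows "clq M s (clq M s S) \<subseteq> clq M s S"
proof
  fix f assume "f \<in> clq M s (clq M s S)"
  then have f_Lq: "f \<in> Lq M s"
    and approx: "\<forall>e>0. \<exists>g\<in>clq M s S. (\<integral>\<^sup>+ w. ennreal (norm (f w - g w) powr s) \<partial>M) < ennreal e"
    using \<open>0 < s\<close> by (auto simp: clq_def)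
  have f_meas [measurable]: "f \<in> borel_measurable M"
    using f_Lq Lq_subset_borel_measurable by blast
  have "\<exists>h\<in>S. (\<integral>\<^sup>+ w. ennreal (norm (f w - h w) powr s) \<partial>M) < ennreal e" if "e > 0" for e
  proof -
    define c where "c = e / (2 * 2 powr s)"
    have "c > 0"
      using that by (simp add: c_def)
    obtain g where g: "g \<in> clq M s S"
      and fg: "(\<integral>\<^sup>+ w. ennreal (norm (f w - g w) powr s) \<partial>M) < ennreal c"
      using approx \<open>c > 0\<close> by blast
    then obtain h where h: "h \<in> S"
      and gh: "(\<integral>\<^sup>+ w. ennreal (norm (g w - h w) powr s) \<partial>M) < ennreal c"
      using \<open>c > 0\<close> \<open>0 < s\<close> by (auto simp: clq_def)
    have [measurable]: "g \<in> borel_measurable M" "h \<in> borel_measurable M"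
      using g h S clq_subset_Lq Lq_subset_borel_measurable by blast+
    have "(\<integral>\<^sup>+ w. ennreal (norm (f w - h w) powr s) \<partial>M)
        \<le> ennreal (2 powr s) * ((\<integral>\<^sup>+ w. ennreal (norm (f w - g w) powr s) \<partial>M)
          + (\<integral>\<^sup>+ w. ennreal (norm (g w - h w) powr s) \<partial>M))"
      using \<open>0 < s\<close> by (intro nn_integral_norm_diff_powr_le) auto
    also have "\<dots> < ennreal (2 powr s) * ennreal (c + c)"
      using fg gh by (intro ennreal_mult_strict_left_mono add_mono_ennreal) auto
    also have "\<dots> = ennreal e"
      by (simp add: c_def flip: ennreal_mult')
    finally show ?thesis
      using h by blast
  qed
  then show "f \<in> clq M s S"
    using f_Lq \<open>0 < s\<close> by (simp add: clq_def)
qed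

lemma (in finite_measure) AE_tendsto_if_fast_convergence_in_measure:
  fixes f :: "'a \<Rightarrow> 'e::{real_normed_vector,second_countable_topology}"
  assumes [measurable]: "f \<in> borel_measurable M" "\<And>n. g n \<in> borel_measurable M"
    and small: "\<And>n. measure M {w \<in> space M. (1 / 2) ^ n < norm (f w - g n w)} < (1 / 2) ^ n"
  shows "AE w in M. (\<lambda>n. g n w) \<longlonglongrightarrow> f w"
proof -
  have "AE w in M. eventually (\<lambda>n. w \<in> space M - {w \<in> space M. (1 / 2) ^ n < norm (f w - g n w)})
      sequentially"
  proof (rule borel_cantelli_AE1)
    show "{w \<in> space M. (1 / 2) ^ n < norm (f w - g n w)} \<in> sets M" for n
      by measurable
    show "emeasure M {w \<in> space M. (1 / 2) ^ n < norm (f w - g n w)} < \<infinity>" for n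
      by (simp add: less_top[symmetric])
    have "summable (\<lambda>n. (1 / 2 :: real) ^ n)"
      by (rule summable_geometric) simp
    moreover have "norm (measure M {w \<in> space M. (1 / 2) ^ n < norm (f w - g n w)}) \<le> (1 / 2) ^ n"
      for n
      using small[of n] by simp
    ultimately show "summable (\<lambda>n. measure M {w \<in> space M. (1 / 2) ^ n < norm (f w - g n w)})"
      by (rule summable_comparison_test')
  qed
  then show ?thesis
  proof eventually_elim
    case (elim w)
    have "eventually (\<lambda>n. norm (g n w - f w) \<le> (1 / 2) ^ n) sequentially"
      using elim by (rule eventually_mono) (auto simp: norm_minus_commute)
    then have "(\<lambda>n. g n w - f w) \<longlonglongrightarrow> 0"
      by (rule Lim_null_comparison) (simp add: LIMSEQ_power_zero)
    then show "(\<lambda>n. g n w) \<longlonglongrightarrow> f w"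
      by (rule LIM_zero_cancel)
  qed
qed

lemma (in prob_space) clq_0_subset_Lq_sel_0:
  assumes closed: "\<forall>w\<in>space M. closed (X w)" and S: "S \<subseteq> Lq_sel M 0 X"
  shows "clq M 0 S \<subseteq> Lq_sel M 0 X"
proof
  fix f assume "f \<in> clq M 0 S"
  then have f_meas [measurable]: "f \<in> borel_measurable M"
    and approx: "\<forall>e>0. \<exists>g\<in>S. measure M {w \<in> space M. e < norm (f w - g w)} < e"
    by (auto simp: clq_def Lq_0)
  have "\<exists>g\<in>S. measure M {w \<in> space M. (1 / 2) ^ n < norm (f w - g w)} < (1 / 2) ^ n" for n :: nat
    using approx by simp
  then obtain g where g: "\<And>n. g n \<in> S"
    and small: "\<And>n. measure M {w \<in> space M. (1 / 2) ^ n < norm (f w - g n w)} < (1 / 2) ^ n"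
    by metis
  have g_meas [measurable]: "g n \<in> borel_measurable M" for n
    using g S by (auto simp: Lq_sel_def Lq_0)
  have "AE w in M. (\<lambda>n. g n w) \<longlonglongrightarrow> f w"
    using small by (rule AE_tendsto_if_fast_convergence_in_measure[OF f_meas g_meas])
  moreover have "AE w in M. \<forall>n. g n w \<in> X w"
    using g S by (subst AE_all_countable) (auto simp: Lq_sel_def)
  ultimately have "AE w in M. f w \<in> X w"
    using AE_space
  proof eventually_elim
    case (elim w)
    have "closed (X w)"
      using closed elim(3) by blast
    then show "f w \<in> X w"
      by (rule closed_sequentially[OF _ _ elim(1)]) (use elim(2) in blast)
  qed
  then show "f \<in> Lq_sel M 0 X"
    using f_meas by (simp add: Lq_sel_def Lq_0)
qed

lemma (in finite_measure) tendsto_measure_norm_greater: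
  assumes [measurable]: "f \<in> borel_measurable M"
  shows "(\<lambda>n. measure M {w \<in> space M. real n < norm (f w)}) \<longlonglongrightarrow> 0"
proof -
  have "{w \<in> space M. real n < norm (f w)} \<in> sets M" for n
    by measurable
  then have "(\<lambda>n. measure M {w \<in> space M. real n < norm (f w)})
      \<longlonglongrightarrow> measure M (\<Inter>n. {w \<in> space M. real n < norm (f w)})"
    by (intro finite_Lim_measure_decseq) (auto simp: decseq_def)
  also have "(\<Inter>n. {w \<in> space M. real n < norm (f w)}) = {}"
    by (auto, meson not_le real_nat_ceiling_ge)
  finally show ?thesis
    by simp
qed

definition truncation :: "real \<Rightarrow> ('w \<Rightarrow> 'e::real_normed_vector) \<Rightarrow> ('w \<Rightarrow> 'e) \<Rightarrow> 'w \<Rightarrow> 'e" where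
  "truncation r f g w = (if norm (f w) \<le> r then f w else g w)"

lemma truncation_measurable [measurable]:
  fixes f g :: "'w \<Rightarrow> 'e::{real_normed_vector,second_countable_topology}"
  assumes [measurable]: "f \<in> borel_measurable M" "g \<in> borel_measurable M"
  shows "truncation r f g \<in> borel_measurable M"
  unfolding truncation_def[abs_def] by measurable

lemma (in finite_measure) truncation_in_Lq_sel:
  assumes "0 < p" "f \<in> Lq_sel M 0 X" "g \<in> Lq_sel M p X"
  shows "truncation r f g \<in> Lq_sel M p X"
proof -
  have [measurable]: "f \<in> borel_measurable M" "g \<in> borel_measurable M"
    and g_int: "integrable M (\<lambda>w. norm (g w) powr p)"
    and sel: "AE w in M. f w \<in> X w" "AE w in M. g w \<in> X w"
    using assms by (auto simp: Lq_sel_def Lq_def)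
  have bound: "norm (truncation r f g w) powr p \<le> \<bar>r\<bar> powr p + norm (g w) powr p" for w
  proof (cases "norm (f w) \<le> r")
    case True
    then have "norm (f w) powr p \<le> \<bar>r\<bar> powr p"
      using \<open>0 < p\<close> by (intro powr_mono2) auto
    then show ?thesis
      using True by (simp add: truncation_def add_increasing2)
  qed (simp add: truncation_def)
  have "integrable M (\<lambda>w. \<bar>r\<bar> powr p + norm (g w) powr p)"
    using g_int by simp
  then have "integrable M (\<lambda>w. norm (truncation r f g w) powr p)"
    by (rule Bochner_Integration.integrable_bound) (use bound in \<open>auto intro!: AE_I2\<close>)
  moreover have "AE w in M. truncation r f g w \<in> X w"
    using sel by eventually_elim (simp add: truncation_def)
  ultimately show ?thesis
    using \<open>0 < p\<close> by (simp add: Lq_sel_def Lq_def)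
qed

lemma tendsto_nn_integral_truncation:
  fixes f g :: "'w \<Rightarrow> 'e::{banach,second_countable_topology}"
  assumes "0 < s" "f \<in> Lq M s" "g \<in> Lq M s"
  shows "(\<lambda>n. \<integral>\<^sup>+ w. ennreal (norm (f w - truncation (real n) f g w) powr s) \<partial>M) \<longlonglongrightarrow> 0"
proof -
  have [measurable]: "f \<in> borel_measurable M" "g \<in> borel_measurable M"
    and f_int: "integrable M (\<lambda>w. norm (f w) powr s)"
    and g_int: "integrable M (\<lambda>w. norm (g w) powr s)"
    using assms by (auto simp: Lq_def)
  define bound where "bound w = 2 powr s * (norm (f w) powr s + norm (g w) powr s)" for w
  have [measurable]: "bound \<in> borel_measurable M"
    unfolding bound_def by measurable
  have "integrable M bound"
    unfolding bound_def using f_int g_int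
    by (intro integrable_mult_right Bochner_Integration.integrable_add)
  then have "(\<integral>\<^sup>+ w. ennreal (bound w) \<partial>M) < \<infinity>"
    using integrableD(2) by (simp add: less_top)
  moreover have "norm (f w - truncation r f g w) powr s \<le> bound w" for r w
    using norm_diff_powr_le[OF \<open>0 < s\<close>, where x="f w" and y=0 and z="g w"]
    by (auto simp: truncation_def bound_def)
  moreover have "eventually (\<lambda>n. ennreal (norm (f w - truncation (real n) f g w) powr s) = 0)
      sequentially" for w
  proof -
    obtain N :: nat where "norm (f w) \<le> real N"
      using real_arch_simple by blast
    then have "norm (f w) \<le> real n" if "N \<le> n" for n
      using that by linarith
    then show ?thesis
      using \<open>0 < s\<close> by (auto simp: eventually_sequentially truncation_def)
  qed
  ultimately have "(\<lambda>n. \<integral>\<^sup>+ w. ennreal (norm (f w - truncation (real n) f g w) powr s) \<partial>M)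
      \<longlonglongrightarrow> (\<integral>\<^sup>+ w. 0 \<partial>M)"
    by (intro nn_integral_dominated_convergence[where w="\<lambda>w. ennreal (bound w)"])
      (auto intro!: AE_I2 ennreal_leI tendsto_eventually)
  then show ?thesis
    by simp
qed

lemma (in prob_space) Lq_sel_0_subset_clq_0:
  assumes "0 < p" "g \<in> Lq_sel M p X"
  shows "Lq_sel M 0 X \<subseteq> clq M 0 (Lq_sel M p X)"
proof
  fix f assume f: "f \<in> Lq_sel M 0 X"
  then have f_meas [measurable]: "f \<in> borel_measurable M"
    by (simp add: Lq_sel_def Lq_0)
  have g_meas [measurable]: "g \<in> borel_measurable M"
    using assms(2) Lq_sel_subset_Lq_sel_0 by (auto simp: Lq_sel_def Lq_0)
  have "\<exists>h\<in>Lq_sel M p X. measure M {w \<in> space M. e < norm (f w - h w)} < e" if e: "e > 0" for e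
  proof -
    obtain n :: nat where n: "measure M {w \<in> space M. real n < norm (f w)} < e"
      using order_tendstoD(2)[OF tendsto_measure_norm_greater[OF f_meas] e]
      by (auto simp: eventually_sequentially)
    have "{w \<in> space M. e < norm (f w - truncation n f g w)} \<subseteq> {w \<in> space M. real n < norm (f w)}"
      using e by (auto simp: truncation_def)
    then have "measure M {w \<in> space M. e < norm (f w - truncation n f g w)}
        \<le> measure M {w \<in> space M. real n < norm (f w)}"
      by (rule finite_measure_mono) measurable
    then show ?thesis
      using n truncation_in_Lq_sel[OF assms(1) f assms(2)] by (intro bexI[of _ "truncation n f g"]) auto
  qed
  then show "f \<in> clq M 0 (Lq_sel M p X)"
    using f_meas by (simp add: clq_def Lq_0)
qed

lemma (in prob_space) Lq_sel_subset_clq: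
  assumes "0 < s" "s \<le> p" "g \<in> Lq_sel M p X"
  shows "Lq_sel M s X \<subseteq> clq M s (Lq_sel M p X)"
proof
  fix f assume f: "f \<in> Lq_sel M s X"
  have "g \<in> Lq M s"
    using assms Lq_antimono Lq_sel_subset_Lq by blast
  then have lim: "(\<lambda>n. \<integral>\<^sup>+ w. ennreal (norm (f w - truncation (real n) f g w) powr s) \<partial>M) \<longlonglongrightarrow> 0"
    using f \<open>0 < s\<close> Lq_sel_subset_Lq by (intro tendsto_nn_integral_truncation) auto
  have "\<exists>h\<in>Lq_sel M p X. (\<integral>\<^sup>+ w. ennreal (norm (f w - h w) powr s) \<partial>M) < ennreal e"
    if "0 < e" for e
  proof -
    obtain n :: nat
      where "(\<integral>\<^sup>+ w. ennreal (norm (f w - truncation (real n) f g w) powr s) \<partial>M) < ennreal e"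
      using order_tendstoD(2)[OF lim, of "ennreal e"] \<open>0 < e\<close> by (auto simp: eventually_sequentially)
    moreover have "truncation (real n) f g \<in> Lq_sel M p X"
      using f assms Lq_sel_subset_Lq_sel_0 by (intro truncation_in_Lq_sel) auto
    ultimately show ?thesis
      by blast
  qed
  then show "f \<in> clq M s (Lq_sel M p X)"
    using f \<open>0 < s\<close> by (simp add: clq_def Lq_sel_def)
qed

lemma (in prob_space) clq_0_dec_eq_Lq_sel_0:
  assumes closed: "\<forall>w\<in>space M. closed (X w)" and "0 < p" "A \<noteq> {}" "A \<subseteq> Lq M p"
    and clq_p: "clq M p (dec M A) = Lq_sel M p X"
  shows "clq M 0 (dec M A) = Lq_sel M 0 X"
proof
  have A_sel: "A \<subseteq> Lq_sel M p X" and dec_sel: "dec M A \<subseteq> Lq_sel M 0 X"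
    using subset_Lq_sel_if_clq_dec_eq[OF \<open>A \<subseteq> Lq M p\<close> clq_p] by auto
  then have dec_meas: "dec M A \<subseteq> borel_measurable M"
    by (auto simp: Lq_sel_def Lq_0)
  obtain g where g: "g \<in> Lq_sel M p X"
    using A_sel \<open>A \<noteq> {}\<close> by blast
  show "clq M 0 (dec M A) \<subseteq> Lq_sel M 0 X"
    using closed dec_sel by (rule clq_0_subset_Lq_sel_0)
  have "Lq_sel M 0 X \<subseteq> clq M 0 (clq M p (dec M A))"
    using Lq_sel_0_subset_clq_0[OF \<open>0 < p\<close> g] clq_p by simp
  also have "\<dots> \<subseteq> clq M 0 (clq M 0 (dec M A))"
    using \<open>0 < p\<close> dec_meas by (intro clq_mono clq_subset_clq_0)
  also have "\<dots> \<subseteq> clq M 0 (dec M A)"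
    using dec_meas by (rule clq_0_clq_0)
  finally show "Lq_sel M 0 X \<subseteq> clq M 0 (dec M A)" .
qed

lemma (in prob_space) clq_dec_eq_Lq_sel:
  assumes closed: "\<forall>w\<in>space M. closed (X w)" and "0 < s" "s \<le> p" "A \<noteq> {}" "A \<subseteq> Lq M p"
    and clq_p: "clq M p (dec M A) = Lq_sel M p X"
  shows "clq M s (dec M A) = Lq_sel M s X"
proof
  have A_sel: "A \<subseteq> Lq_sel M p X" and dec_sel: "dec M A \<subseteq> Lq_sel M 0 X"
    using subset_Lq_sel_if_clq_dec_eq[OF \<open>A \<subseteq> Lq M p\<close> clq_p] by auto
  then have dec_meas: "dec M A \<subseteq> borel_measurable M"
    by (auto simp: Lq_sel_def Lq_0)
  obtain g where g: "g \<in> Lq_sel M p X"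
    using A_sel \<open>A \<noteq> {}\<close> by blast
  have "clq M s (dec M A) \<subseteq> clq M 0 (dec M A) \<inter> Lq M s"
    using clq_subset_clq_0[OF \<open>0 < s\<close> dec_meas] clq_subset_Lq by blast
  also have "\<dots> = Lq_sel M 0 X \<inter> Lq M s"
    using clq_0_dec_eq_Lq_sel_0[OF closed _ assms(4,5) clq_p] assms(2,3) by simp
  also have "\<dots> = Lq_sel M s X"
    by (rule Lq_sel_Int_Lq) (rule Lq_subset_Lq_0)
  finally show "clq M s (dec M A) \<subseteq> Lq_sel M s X" .
  have "Lq_sel M s X \<subseteq> clq M s (clq M p (dec M A))"
    using Lq_sel_subset_clq[OF \<open>0 < s\<close> \<open>s \<le> p\<close> g] clq_p by simp
  also have "\<dots> \<subseteq> clq M s (clq M s (dec M A))"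
    using \<open>0 < s\<close> \<open>s \<le> p\<close> dec_meas by (intro clq_mono clq_subset_clq)
  also have "\<dots> \<subseteq> clq M s (dec M A)"
    using \<open>0 < s\<close> dec_meas by (rule clq_clq)
  finally show "Lq_sel M s X \<subseteq> clq M s (dec M A)" .
qed

theorem mainTheorem13:
  fixes M :: "'w measure" and A :: "('w \<Rightarrow> 'e::{banach,second_countable_topology}) set"
    and X :: "'w \<Rightarrow> 'e set" and s p :: real
  assumes "prob_space M" and "complete_measure M"
    and "1 \<le> s" and "s < p"
    and "A \<noteq> {}" and "A \<subseteq> Lq M p"
    and "closed_random_set M X" and "clq M p (dec M A) = Lq_sel M p X"
  shows "chd M s A = chd M 0 A \<inter> Lq M s
    \<and> chd M 0 A \<inter> Lq M s = Lq_sel M 0 X \<inter> Lq M s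
    \<and> Lq_sel M 0 X \<inter> Lq M s = Lq_sel M s X
    \<and> chd M s A \<inter> Lq M p = chd M 0 A \<inter> Lq M p
    \<and> chd M 0 A \<inter> Lq M p = chd M p A"
proof -
  interpret prob_space M by fact
  note X = \<open>closed_random_set M X\<close> and clq_p = \<open>clq M p (dec M A) = Lq_sel M p X\<close>
  have closed: "\<forall>w\<in>space M. closed (X w)"
    using X by (simp add: closed_random_set_def)
  have "0 < s" "s \<le> p"
    using assms by auto
  then have Lq_incl: "Lq M p \<subseteq> (Lq M s :: ('w \<Rightarrow> 'e) set)" "Lq M s \<subseteq> (Lq M 0 :: ('w \<Rightarrow> 'e) set)"
    "Lq M p \<subseteq> (Lq M 0 :: ('w \<Rightarrow> 'e) set)"
    using Lq_antimono Lq_subset_Lq_0 by blast+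
  have "chd M s A = Lq_sel M s X"
    using clq_dec_eq_Lq_sel[OF closed \<open>0 < s\<close> \<open>s \<le> p\<close> assms(5,6) clq_p] assms(6) Lq_incl
    by (intro chd_eq_Lq_sel[OF X]) auto
  moreover have "chd M 0 A = Lq_sel M 0 X"
    using clq_0_dec_eq_Lq_sel_0[OF closed _ assms(5,6) clq_p] \<open>0 < s\<close> \<open>s \<le> p\<close> assms(6) Lq_incl
    by (intro chd_eq_Lq_sel[OF X]) auto
  moreover have "chd M p A = Lq_sel M p X"
    using clq_p assms(6) by (intro chd_eq_Lq_sel[OF X]) auto
  ultimately show ?thesis
    using Lq_sel_Int_Lq[OF Lq_incl(1)] Lq_sel_Int_Lq[OF Lq_incl(2)] Lq_sel_Int_Lq[OF Lq_incl(3)] by simp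
qed

end
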